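(* For $\tau$ in the upper half-plane, $$\frac{(v^2(\tau)+1)^2}{v^4(\tau)-6v^2(\tau)+1}=\frac{4}{\mathfrak{b}^2(4\tau)}.$$
   Context: $q=e^{2\pi i\tau}$, $q^r:=e^{2\pi i r\tau}$. $v(\tau)=q^{1/2}\prod_{n\ge1}(1-q^n)^{\left(\frac{8}{n}\right)}$ with $\left(\frac{8}{n}\right)$ the Kronecker symbol, and $\mathfrak{b}(\tau)=2\prod_{n\ge1}\left(\frac{1-q^{n/2-1/4}}{1+q^{n/2-1/4}}\right)^2$. *)

theory Defs
  imports "HOL-Analysis.Analysis"
begin

definition qpow :: "complex \<Rightarrow> real \<Rightarrow> complex" where
  "qpow \<tau> r = exp (2 * of_real pi * \<i> * of_real r * \<tau>)"

definition kron8 :: "nat \<Rightarrow> int" where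
  "kron8 n = (if even n then 0
              else if n mod 8 = 1 \<or> n mod 8 = 7 then 1 else -1)"

definition v_fun :: "complex \<Rightarrow> complex" where
  "v_fun \<tau> = qpow \<tau> (1/2) *
     (\<Prod>m. (1 - qpow \<tau> (real (Suc m))) powi kron8 (Suc m))"

definition b_fun :: "complex \<Rightarrow> complex" where
  "b_fun \<tau> = 2 *
     (\<Prod>m. ((1 - qpow \<tau> (real (Suc m) / 2 - 1/4)) /
            (1 + qpow \<tau> (real (Suc m) / 2 - 1/4))) ^ 2)"

end

(*
  Put x = q. By the Jacobi triple product, v and b are quotients of theta series:
  v^2 = x (Y/X)^2 and b(4 tau) = 2 T4/T3, where
    T3 = sum x^(n^2),  T4 = sum (-1)^n x^(n^2),
    X = sum (-1)^n x^(4n^2+n),  Y = sum (-1)^n x^(4n^2+3n)   (sums over all integers n).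
  Three relations between theta series then suffice:
  (1) splitting n by parity, T3 = A + x B and T4 = A - x B,
      where A = sum x^(4n^2) and B = sum x^(4n^2+4n);
  (2) pairing (m, n) with (s + t, s - t) or (-s - t - 1, t - s), P = X^2 + x Y^2
      for P = (sum x^(2m^2+m)) (sum (-1)^n x^(2n^2));
  (3) A B P^2 = 2 T3^2 X^2 Y^2, which becomes a rational identity once every theta series is
      written as a product of the sixteen products prod_n (1 - x^(16n+r)), 1 <= r <= 16.
  Writing w = v^2 and T = T4/T3, they give (1 - T^2)(w + 1)^2 = 8w, i.e.
  w^2 - 6w + 1 = T^2 (w + 1)^2, which is the claim.
*)

theory Submission
  imports Defs
begin

section \<open>Partial products\<close>

text \<open>Convergence of the partial products to a possibly zero limit; unlike \<open>has_prod\<close>, this is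
  the right notion for the Jacobi triple product, whose factors may vanish.\<close>

definition prods :: "(nat \<Rightarrow> 'a::real_normed_field) \<Rightarrow> 'a \<Rightarrow> bool" (infixr "prods" 80) where
  "f prods L \<longleftrightarrow> (\<lambda>n. \<Prod>i<n. f i) \<longlonglongrightarrow> L"

lemma prods_mult: "f prods L \<Longrightarrow> g prods M \<Longrightarrow> (\<lambda>n. f n * g n) prods (L * M)"
  unfolding prods_def by (simp add: prod.distrib tendsto_mult)

lemma prods_divide: "f prods L \<Longrightarrow> g prods M \<Longrightarrow> M \<noteq> 0 \<Longrightarrow> (\<lambda>n. f n / g n) prods (L / M)"
  unfolding prods_def by (simp add: prod_dividef tendsto_divide)

lemma prods_power: "f prods L \<Longrightarrow> (\<lambda>n. f n ^ k) prods (L ^ k)"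
  unfolding prods_def prod_power_distrib[symmetric] by (rule tendsto_power)

lemma prods_prod:
  "finite I \<Longrightarrow> (\<And>i. i \<in> I \<Longrightarrow> f i prods L i) \<Longrightarrow> (\<lambda>n. \<Prod>i\<in>I. f i n) prods (\<Prod>i\<in>I. L i)"
  unfolding prods_def by (subst prod.swap) (rule tendsto_prod, auto)

lemma prods_unique: "f prods L \<Longrightarrow> f prods M \<Longrightarrow> L = M"
  unfolding prods_def using LIMSEQ_unique by blast

lemma prods_Suc:
  assumes "f prods L" "f 0 \<noteq> 0"
  shows "(\<lambda>n. f (Suc n)) prods (L / f 0)"
proof -
  have "(\<lambda>n. (\<Prod>i<Suc n. f i) / f 0) \<longlonglongrightarrow> L / f 0"
    using assms(2) LIMSEQ_Suc[OF assms(1)[unfolded prods_def]] by (intro tendsto_divide) auto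
  moreover have "(\<Prod>i<Suc n. f i) / f 0 = (\<Prod>i<n. f (Suc i))" for n
    using assms(2) by (simp only: prod.lessThan_Suc_shift) simp
  ultimately show ?thesis
    unfolding prods_def by simp
qed

lemma prods_blocks:
  assumes "f prods L" "k > 0"
  shows "(\<lambda>m. \<Prod>r<k. f (k * m + r)) prods L"
proof -
  have "filterlim (\<lambda>N. N * k) sequentially sequentially"
    using assms(2) by (intro filterlim_subseq) (auto simp: strict_mono_def)
  then have lim: "(\<lambda>N. \<Prod>n<N * k. f n) \<longlonglongrightarrow> L"
    using filterlim_compose assms(1) unfolding prods_def by blast
  have blocks: "(\<Prod>n<N * k. f n) = (\<Prod>m<N. \<Prod>r<k. f (k * m + r))" for N
  proof -
    have "(\<Prod>n<N * k. f n) = (\<Prod>m<N. prod f {m * k..<m * k + k})"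
      by (rule prod.nat_group[symmetric])
    also have "\<dots> = (\<Prod>m<N. \<Prod>r<k. f (k * m + r))"
    proof (rule prod.cong[OF refl])
      fix m
      have "prod f {m * k..<m * k + k} = (\<Prod>r\<in>{0..<k}. f (r + m * k))"
        using prod.shift_bounds_nat_ivl[of f 0 "m * k" k] by (simp add: add.commute)
      then show "prod f {m * k..<m * k + k} = (\<Prod>r<k. f (k * m + r))"
        by (simp add: atLeast0LessThan add.commute mult.commute)
    qed
    finally show ?thesis .
  qed
  from lim show ?thesis
    unfolding prods_def blocks .
qed

lemma convergent_prod_if_summable_norm:
  fixes f :: "nat \<Rightarrow> 'a::{real_normed_field, banach}"
  shows "summable (\<lambda>n. norm (f n - 1)) \<Longrightarrow> convergent_prod f"
  by (intro abs_convergent_prod_imp_convergent_prod summable_imp_abs_convergent_prod)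

lemma prods_prodinf:
  fixes f :: "nat \<Rightarrow> 'a::{real_normed_field, banach}"
  assumes "summable (\<lambda>n. norm (f n - 1))"
  shows "f prods prodinf f"
proof -
  have "convergent_prod f"
    using assms by (rule convergent_prod_if_summable_norm)
  then have "(\<lambda>n. \<Prod>i<Suc n. f i) \<longlonglongrightarrow> prodinf f"
    by (simp add: lessThan_Suc_atMost convergent_prod_LIMSEQ)
  then show ?thesis
    unfolding prods_def by (rule LIMSEQ_imp_Suc)
qed

lemma prodinf_nonzero:
  fixes f :: "nat \<Rightarrow> 'a::{real_normed_field, banach}"
  assumes "summable (\<lambda>n. norm (f n - 1))" "\<And>n. f n \<noteq> 0"
  shows "prodinf f \<noteq> 0"
proof -
  have "convergent_prod f"
    using assms(1) by (rule convergent_prod_if_summable_norm)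
  then have "f has_prod prodinf f"
    using convergent_prod_has_prod by blast
  from has_prod_eq_0_iff[OF this] show ?thesis
    using assms(2) by auto
qed

lemma prodinf_eqI_prods:
  assumes "f prods L" "L \<noteq> 0"
  shows "prodinf f = L"
proof -
  have "raw_has_prod f 0 L"
    using LIMSEQ_Suc[OF assms(1)[unfolded prods_def]] assms(2)
    by (simp add: raw_has_prod_def lessThan_Suc_atMost)
  then have "f has_prod L"
    unfolding has_prod_def by blast
  then show ?thesis
    using has_prod_iff by blast
qed

lemma has_sum_int_split:
  fixes f :: "int \<Rightarrow> complex"
  assumes "summable (\<lambda>j. norm (f (int j)))" "summable (\<lambda>j. norm (f (- int j - 1)))"
  shows "(f has_sum ((\<Sum>j. f (int j)) + (\<Sum>j. f (- int j - 1)))) UNIV"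
proof -
  have "((\<lambda>j. f (int j)) has_sum (\<Sum>j. f (int j))) UNIV"
    "((\<lambda>j. f (- int j - 1)) has_sum (\<Sum>j. f (- int j - 1))) UNIV"
    using assms by (auto intro!: norm_summable_imp_has_sum summable_sums summable_norm_cancel)
  moreover have "inj (\<lambda>j::nat. - int j - 1)"
    by (simp add: inj_on_def)
  moreover have "range int = {n. 0 \<le> n}"
    by (auto simp: image_iff) (metis nonneg_int_cases)
  moreover have "range (\<lambda>j::nat. - int j - 1) = {n. n < 0}"
  proof (auto simp: image_iff)
    fix n :: int
    assume "n < 0"
    then show "\<exists>j. n = - int j - 1"
      by (intro exI[of _ "nat (- n - 1)"]) simp
  qed
  ultimately have "(f has_sum (\<Sum>j. f (int j))) {n. 0 \<le> n}"
    "(f has_sum (\<Sum>j. f (- int j - 1))) {n. n < 0}"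
    using has_sum_reindex[of int UNIV f] has_sum_reindex[of "\<lambda>j. - int j - 1" UNIV f]
    by (simp_all add: o_def)
  moreover have "{n::int. 0 \<le> n} \<inter> {n. n < 0} = {}"
    by auto
  ultimately
  have "(f has_sum ((\<Sum>j. f (int j)) + (\<Sum>j. f (- int j - 1)))) ({n. 0 \<le> n} \<union> {n. n < 0})"
    by (rule has_sum_Un_disjoint)
  moreover have "{n::int. 0 \<le> n} \<union> {n. n < 0} = UNIV"
    by auto
  ultimately show ?thesis
    by simp
qed

lemma has_sum_even_odd:
  fixes f :: "int \<Rightarrow> 'a::{topological_comm_monoid_add, t2_space}"
  assumes "((\<lambda>m. f (2 * m)) has_sum A) UNIV" "((\<lambda>m. f (2 * m + 1)) has_sum B) UNIV"
  shows "(f has_sum (A + B)) UNIV"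
proof -
  have "(f has_sum A) {n. even n}"
    using assms(1)
    by (subst has_sum_reindex_bij_witness[where j = "\<lambda>m. 2 * m" and i = "\<lambda>n. n div 2", symmetric])
       auto
  moreover have "(f has_sum B) {n. odd n}"
    using assms(2)
    by (subst has_sum_reindex_bij_witness[where j = "\<lambda>m. 2 * m + 1" and i = "\<lambda>n. n div 2", symmetric])
       auto
  ultimately have "(f has_sum (A + B)) ({n. even n} \<union> {n. odd n})"
    by (rule has_sum_Un_disjoint) auto
  moreover have "{n::int. even n} \<union> {n. odd n} = UNIV"
    by auto
  ultimately show ?thesis
    by simp
qed

lemma has_sum_product:
  fixes f g :: "'a::countable \<Rightarrow> complex"
  assumes "(f has_sum A) UNIV" "(g has_sum B) UNIV"
  shows "((\<lambda>(m, n). f m * g n) has_sum (A * B)) UNIV"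
proof -
  have abs: "Infinite_Set_Sum.abs_summable_on f UNIV" "Infinite_Set_Sum.abs_summable_on g UNIV"
    using has_sum_imp_summable[OF assms(1)] has_sum_imp_summable[OF assms(2)]
    by (simp_all add: summable_on_iff_abs_summable_on_complex abs_summable_equivalent)
  then have "Infinite_Set_Sum.abs_summable_on (\<lambda>(m, n). f m * g n) (UNIV \<times> UNIV)"
    by (intro abs_summable_on_product) auto
  moreover have "infsetsum (\<lambda>(m, n). f m * g n) (UNIV \<times> UNIV) = infsetsum f UNIV * infsetsum g UNIV"
    using abs by (intro infsetsum_product) auto
  moreover have "infsetsum f UNIV = A" "infsetsum g UNIV = B"
    using abs assms by (simp_all add: infsetsum_infsum infsumI)
  ultimately show ?thesis
    by (metis UNIV_Times_UNIV abs_summable_equivalent infsetsum_infsum has_sum_infsum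
        summable_on_iff_abs_summable_on_complex)
qed

section \<open>q-Pochhammer symbols\<close>

lemma norm_power_less_one: "norm (x::complex) < 1 \<Longrightarrow> 0 < m \<Longrightarrow> norm (x ^ m) < 1"
  by (simp add: norm_power power_less_one_iff)

lemma one_minus_power_nonzero: "norm (x::complex) < 1 \<Longrightarrow> 0 < m \<Longrightarrow> 1 - x ^ m \<noteq> 0"
  using norm_power_less_one[of x m] by auto

lemma one_plus_power_nonzero: "norm (x::complex) < 1 \<Longrightarrow> 0 < m \<Longrightarrow> 1 + x ^ m \<noteq> 0"
  using norm_power_less_one[of x m] by (auto simp: add_eq_0_iff)

lemma summable_norm_power_linear:
  fixes x c :: complex
  assumes "norm x < 1" "0 < a"
  shows "summable (\<lambda>n. norm (c * x ^ (a * n + b)))"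
proof -
  have "summable (\<lambda>n. (norm c * norm x ^ b) * (norm x ^ a) ^ n)"
    using assms by (intro summable_mult summable_geometric) (simp add: power_less_one_iff)
  moreover have "norm (c * x ^ (a * n + b)) = (norm c * norm x ^ b) * (norm x ^ a) ^ n" for n
    by (simp add: norm_mult norm_power power_add power_mult mult_ac)
  ultimately show ?thesis
    by simp
qed

text \<open>\<open>qpoch x a b\<close> is the q-Pochhammer symbol \<open>(x\<^sup>b; x\<^sup>a)\<^sub>\<infinity>\<close>.\<close>

definition qpoch :: "complex \<Rightarrow> nat \<Rightarrow> nat \<Rightarrow> complex" where
  "qpoch x a b = (\<Prod>n. 1 - x ^ (a * n + b))"

lemma prods_qpoch: "norm x < 1 \<Longrightarrow> 0 < a \<Longrightarrow> (\<lambda>n. 1 - x ^ (a * n + b)) prods qpoch x a b"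
  unfolding qpoch_def
  by (rule prods_prodinf) (use summable_norm_power_linear[of x a "-1" b] in simp)

lemma qpoch_nonzero: "norm x < 1 \<Longrightarrow> 0 < a \<Longrightarrow> 0 < b \<Longrightarrow> qpoch x a b \<noteq> 0"
  unfolding qpoch_def
  by (rule prodinf_nonzero)
     (use summable_norm_power_linear[of x a "-1" b] one_minus_power_nonzero[of x] in auto)

lemma qpoch_dissect:
  assumes x: "norm x < 1" and "0 < a" "0 < k"
  shows "qpoch x a b = (\<Prod>j<k. qpoch x (k * a) (a * j + b))"
proof -
  have "(\<lambda>m. \<Prod>j<k. 1 - x ^ (a * (k * m + j) + b)) prods qpoch x a b"
    by (rule prods_blocks[OF prods_qpoch]) (use assms in auto)
  moreover have "(\<lambda>m. \<Prod>j<k. 1 - x ^ (k * a * m + (a * j + b)))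
                   prods (\<Prod>j<k. qpoch x (k * a) (a * j + b))"
    by (rule prods_prod) (use assms in \<open>auto intro: prods_qpoch\<close>)
  moreover have "a * (k * m + j) + b = k * a * m + (a * j + b)" for m j
    by (simp add: algebra_simps)
  ultimately show ?thesis
    using prods_unique by simp
qed

text \<open>\<open>qpoch_plus x a b\<close> is \<open>(-x\<^sup>b; x\<^sup>a)\<^sub>\<infinity>\<close>, obtained from \<open>1 + t = (1 - t\<^sup>2) / (1 - t)\<close>.\<close>

definition qpoch_plus :: "complex \<Rightarrow> nat \<Rightarrow> nat \<Rightarrow> complex" where
  "qpoch_plus x a b = qpoch x (2 * a) (2 * b) / qpoch x a b"

lemma prods_qpoch_plus:
  assumes x: "norm x < 1" and "0 < a" "0 < b"
  shows "(\<lambda>n. 1 + x ^ (a * n + b)) prods qpoch_plus x a b"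
proof -
  have "(\<lambda>n. (1 - x ^ (2 * a * n + 2 * b)) / (1 - x ^ (a * n + b))) prods qpoch_plus x a b"
    unfolding qpoch_plus_def using assms
    by (intro prods_divide prods_qpoch qpoch_nonzero) auto
  moreover have "(1 - x ^ (2 * a * n + 2 * b)) / (1 - x ^ (a * n + b)) = 1 + x ^ (a * n + b)" for n
  proof -
    have "x ^ (2 * a * n + 2 * b) = (x ^ (a * n + b))\<^sup>2"
      by (simp add: power_mult[symmetric] algebra_simps)
    then show ?thesis
      using one_minus_power_nonzero[OF x, of "a * n + b"] assms
      by (simp add: field_simps power2_eq_square)
  qed
  ultimately show ?thesis
    by simp
qed

lemma qpoch_plus_nonzero: "norm x < 1 \<Longrightarrow> 0 < a \<Longrightarrow> 0 < b \<Longrightarrow> qpoch_plus x a b \<noteq> 0"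
  unfolding qpoch_plus_def by (simp add: qpoch_nonzero)

section \<open>The finite Jacobi triple product\<close>

fun qbinomial_coeff :: "complex \<Rightarrow> nat \<Rightarrow> nat \<Rightarrow> complex" where
  "qbinomial_coeff p 0 k = (if k = 0 then 1 else 0)"
| "qbinomial_coeff p (Suc n) 0 = 1"
| "qbinomial_coeff p (Suc n) (Suc k)
     = qbinomial_coeff p n (Suc k) + p ^ (2 * n) * qbinomial_coeff p n k"

lemma qbinomial_coeff_0_right [simp]: "qbinomial_coeff p n 0 = 1"
  by (cases n) auto

lemma qbinomial_coeff_eq_0: "n < k \<Longrightarrow> qbinomial_coeff p n k = 0"
proof (induction n arbitrary: k)
  case (Suc n)
  then show ?case
    by (cases k) auto
qed simp

lemma prod_one_plus_geometric_eq_sum: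
  "(\<Prod>i<n. 1 + y * p ^ (2 * i)) = (\<Sum>k\<le>n. qbinomial_coeff p n k * y ^ k)"
proof (induction n)
  case (Suc n)
  have "(\<Sum>k\<le>Suc n. qbinomial_coeff p (Suc n) k * y ^ k)
        = 1 + (\<Sum>k\<le>n. qbinomial_coeff p n (Suc k) * y ^ Suc k)
            + y * p ^ (2 * n) * (\<Sum>k\<le>n. qbinomial_coeff p n k * y ^ k)"
    by (subst sum.atMost_Suc_shift) (simp add: sum.distrib sum_distrib_left algebra_simps)
  also have "1 + (\<Sum>k\<le>n. qbinomial_coeff p n (Suc k) * y ^ Suc k)
             = (\<Sum>k\<le>Suc n. qbinomial_coeff p n k * y ^ k)"
    by (subst sum.atMost_Suc_shift) simp
  also have "\<dots> = (\<Sum>k\<le>n. qbinomial_coeff p n k * y ^ k)"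
    by (simp add: qbinomial_coeff_eq_0)
  finally show ?case
    using Suc by (simp add: algebra_simps)
qed simp

text \<open>\<open>qfact p n\<close> is \<open>(p\<^sup>2; p\<^sup>2)\<^sub>n\<close> and \<open>gauss_binomial p n k\<close> the Gaussian binomial
  coefficient in base \<open>p\<^sup>2\<close>; the latter is only meaningful for \<open>k \<le> n\<close>.\<close>

definition qfact :: "complex \<Rightarrow> nat \<Rightarrow> complex" where
  "qfact p n = (\<Prod>i<n. 1 - p ^ (2 * i + 2))"

definition gauss_binomial :: "complex \<Rightarrow> nat \<Rightarrow> nat \<Rightarrow> complex" where
  "gauss_binomial p n k = qfact p n / (qfact p k * qfact p (n - k))"

lemma qfact_0 [simp]: "qfact p 0 = 1"
  unfolding qfact_def by simp

lemma qfact_Suc: "qfact p (Suc n) = qfact p n * (1 - p ^ (2 * Suc n))"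
  unfolding qfact_def by simp

lemma qfact_nonzero: "norm p < 1 \<Longrightarrow> qfact p n \<noteq> 0"
  unfolding qfact_def using one_minus_power_nonzero[of p "2 * _ + 2"] by simp

lemma gauss_binomial_Suc_Suc:
  assumes p: "norm p < 1" and "k < n"
  shows "gauss_binomial p (Suc n) (Suc k)
         = gauss_binomial p n (Suc k) + p ^ (2 * (n - k)) * gauss_binomial p n k"
proof -
  obtain m where n: "n = k + Suc m"
    using \<open>k < n\<close> less_iff_Suc_add by (auto simp: add.commute)
  define u w where "u = p ^ (2 * Suc m)" and "w = p ^ (2 * Suc k)"
  have diffs: "Suc n - Suc k = Suc m" "n - Suc k = m" "n - k = Suc m"
    using n by auto
  have uw: "1 - u \<noteq> 0" "1 - w \<noteq> 0"
    unfolding u_def w_def by (rule one_minus_power_nonzero[OF p], simp)+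
  have "p ^ (2 * Suc n) = u * w"
    unfolding n u_def w_def by (simp add: power_add[symmetric] add.commute)
  then have "gauss_binomial p (Suc n) (Suc k)
             = qfact p n * (1 - u * w) / (qfact p k * (1 - w) * (qfact p m * (1 - u)))"
    unfolding gauss_binomial_def diffs qfact_Suc u_def[symmetric] w_def[symmetric] by simp
  moreover have "gauss_binomial p n (Suc k) = qfact p n / (qfact p k * (1 - w) * qfact p m)"
    unfolding gauss_binomial_def diffs qfact_Suc w_def[symmetric] ..
  moreover have "gauss_binomial p n k = qfact p n / (qfact p k * (qfact p m * (1 - u)))"
    unfolding gauss_binomial_def diffs qfact_Suc u_def[symmetric] ..
  moreover have "A * (1 - u * w) / (K * (1 - w) * (M * (1 - u)))
                 = A / (K * (1 - w) * M) + u * (A / (K * (M * (1 - u))))"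
    if "K \<noteq> 0" "M \<noteq> 0" for A K M :: complex
  proof -
    have "A * (1 - (1 - a) * (1 - b)) / (K * b * (M * a))
          = A / (K * b * M) + (1 - a) * (A / (K * (M * a)))"
      if "a \<noteq> 0" "b \<noteq> 0" for a b
      using that \<open>K \<noteq> 0\<close> \<open>M \<noteq> 0\<close> by (simp add: field_simps)
    from this[OF uw] show ?thesis
      by simp
  qed
  ultimately show ?thesis
    unfolding diffs u_def[symmetric] by (simp add: qfact_nonzero[OF p])
qed

lemma qbinomial_coeff_eq_gauss_binomial:
  assumes p: "norm p < 1"
  shows "k \<le> n \<Longrightarrow> qbinomial_coeff p n k = p ^ (k * (k - 1)) * gauss_binomial p n k"
proof (induction n arbitrary: k)
  case 0
  then show ?case
    by (simp add: gauss_binomial_def)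
next
  case (Suc n)
  show ?case
  proof (cases k)
    case 0
    then show ?thesis
      by (simp add: gauss_binomial_def qfact_nonzero[OF p])
  next
    case (Suc j)
    show ?thesis
    proof (cases "j = n")
      case True
      have "qbinomial_coeff p (Suc n) (Suc n) = p ^ (2 * n) * p ^ (n * (n - 1))"
        using Suc.IH[of n]
        by (simp add: qbinomial_coeff_eq_0 gauss_binomial_def qfact_nonzero[OF p])
      also have "\<dots> = p ^ (2 * n + n * (n - 1))"
        by (simp add: power_add)
      also have "2 * n + n * (n - 1) = Suc n * n"
        by (cases n) (auto simp: algebra_simps)
      finally show ?thesis
        using True Suc by (simp add: gauss_binomial_def qfact_nonzero[OF p])
    next
      case False
      with Suc Suc.prems have "j < n"
        by simp
      then have "2 * n + j * (j - 1) = Suc j * j + 2 * (n - j)"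
        by (cases j) (auto simp: algebra_simps)
      then have "p ^ (2 * n) * p ^ (j * (j - 1)) = p ^ (Suc j * j) * p ^ (2 * (n - j))"
        by (simp add: power_add[symmetric])
      then show ?thesis
        using Suc.IH[of j] Suc.IH[of "Suc j"] \<open>j < n\<close> Suc
        by (simp add: gauss_binomial_Suc_Suc[OF p] algebra_simps)
    qed
  qed
qed

lemma prod_lessThan_add: "(\<Prod>i<(a::nat) + b. g i) = (\<Prod>i<a. g i) * (\<Prod>i<b. g (a + i))"
  by (induction b) (simp_all add: mult.assoc)

lemma sum_atMost_add: "(\<Sum>k\<le>(a::nat) + b. t k) = (\<Sum>k\<le>a. t k) + (\<Sum>j<b. t (a + 1 + j))"
  by (induction b) (simp_all add: add.assoc)

lemma sum_atMost_reflect: "(\<Sum>k\<le>(n::nat). t k) = (\<Sum>j\<le>n. t (n - j))"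
  using sum.nat_diff_reindex[of t "Suc n"] by (simp add: lessThan_Suc_atMost)

lemma prod_odd_powers: "(\<Prod>i<n. z * p ^ (2 * i + 1)) = z ^ n * (p::complex) ^ (n * n)"
proof (induction n)
  case (Suc n)
  have "Suc n * Suc n = n * n + (2 * n + 1)"
    by (simp add: algebra_simps)
  moreover have "(\<Prod>i<Suc n. z * p ^ (2 * i + 1)) = (z ^ n * p ^ (n * n)) * (z * p ^ (2 * n + 1))"
    by (simp only: prod.lessThan_Suc Suc.IH)
  ultimately show ?case
    by (simp only: power_add power_Suc mult_ac)
qed simp

definition jacobi_term :: "complex \<Rightarrow> complex \<Rightarrow> int \<Rightarrow> complex" where
  "jacobi_term p z n = p powi (n * n) * z powi n"

lemma jacobi_term_eq_power_product:
  fixes p z :: complex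
  assumes "p \<noteq> 0" "z \<noteq> 0"
  shows "z ^ n * p ^ (n * n) * (p ^ (k * (k - 1)) * (p / (z * p ^ (2 * n))) ^ k)
         = jacobi_term p z (int n - int k)"
proof -
  have "p ^ (k * (k - 1)) * p ^ k = p ^ (k * k)"
    by (cases k) (simp_all add: power_add[symmetric] algebra_simps)
  moreover have "p ^ (2 * n * k) = (p ^ (2 * n)) ^ k"
    by (simp only: power_mult)
  ultimately have "z ^ n * p ^ (n * n) * (p ^ (k * (k - 1)) * (p / (z * p ^ (2 * n))) ^ k)
                   = z ^ n * p ^ (n * n + k * k) / (z ^ k * p ^ (2 * n * k))"
    by (simp add: power_divide power_mult_distrib power_add mult.assoc)
  also have "\<dots> = (z powi int n / z powi int k)
                    * (p powi int (n * n + k * k) / p powi int (2 * n * k))"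
    by (simp only: power_int_of_nat times_divide_times_eq)
  also have "\<dots> = z powi (int n - int k) * p powi (int (n * n + k * k) - int (2 * n * k))"
    using assms by (simp add: power_int_diff)
  also have "int (n * n + k * k) - int (2 * n * k) = (int n - int k) * (int n - int k)"
    by (simp add: algebra_simps)
  finally show ?thesis
    unfolding jacobi_term_def by (simp only: mult.commute)
qed

text \<open>Put \<open>y = p / (z p\<^sup>2\<^sup>N)\<close> in the expansion of \<open>\<Prod>i<2N. 1 + y p\<^sup>2\<^sup>i\<close>: the first \<open>N\<close> factors
  become \<open>(1 + z p\<^sup>2\<^sup>i\<^sup>+\<^sup>1) / (z p\<^sup>2\<^sup>i\<^sup>+\<^sup>1)\<close> (in reverse order), the last \<open>N\<close> become
  \<open>1 + p\<^sup>2\<^sup>i\<^sup>+\<^sup>1 / z\<close>.\<close>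

lemma prod_triple_factors_eq_prod_geometric:
  fixes p z :: complex and N :: nat
  assumes p: "p \<noteq> 0" and z: "z \<noteq> 0"
  defines "y \<equiv> p / (z * p ^ (2 * N))"
  shows "(\<Prod>i<N. (1 + z * p ^ (2 * i + 1)) * (1 + p ^ (2 * i + 1) / z))
         = z ^ N * p ^ (N * N) * (\<Prod>i<N + N. 1 + y * p ^ (2 * i))"
proof -
  define g where "g i = 1 + y * p ^ (2 * i)" for i
  have low: "g (N - Suc i) = (1 + z * p ^ (2 * i + 1)) / (z * p ^ (2 * i + 1))" if "i < N" for i
  proof -
    obtain d where d: "N = Suc i + d"
      using \<open>i < N\<close> less_iff_Suc_add by blast
    have "y * p ^ (2 * d) = 1 / (z * p ^ (2 * i + 1))"
      unfolding y_def d using p z by (simp add: field_simps power_add)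
    then show ?thesis
      unfolding g_def d using p z by (simp add: field_simps)
  qed
  have high: "g (N + i) = 1 + p ^ (2 * i + 1) / z" for i
    unfolding g_def y_def using p z by (simp add: field_simps power_add)
  have "(\<Prod>i<N. g i) = (\<Prod>i<N. g (N - Suc i))"
    by (rule prod.nat_diff_reindex[symmetric])
  also have "\<dots> = (\<Prod>i<N. (1 + z * p ^ (2 * i + 1)) / (z * p ^ (2 * i + 1)))"
    by (rule prod.cong) (auto simp: low)
  also have "\<dots> = (\<Prod>i<N. 1 + z * p ^ (2 * i + 1)) / (z ^ N * p ^ (N * N))"
    by (simp only: prod_dividef prod_odd_powers)
  finally have "(\<Prod>i<N + N. g i)
                = (\<Prod>i<N. (1 + z * p ^ (2 * i + 1)) * (1 + p ^ (2 * i + 1) / z))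
                  / (z ^ N * p ^ (N * N))"
    by (simp add: prod_lessThan_add high prod.distrib)
  then show ?thesis
    unfolding g_def using p z by (simp add: field_simps)
qed

lemma finite_jacobi_triple_product:
  fixes p z :: complex
  assumes p: "norm p < 1" "p \<noteq> 0" and z: "z \<noteq> 0"
  shows "(\<Prod>i<N. (1 + z * p ^ (2 * i + 1)) * (1 + p ^ (2 * i + 1) / z))
         = (\<Sum>j\<le>N. gauss_binomial p (2 * N) (N - j) * jacobi_term p z (int j))
           + (\<Sum>j<N. gauss_binomial p (2 * N) (N + 1 + j) * jacobi_term p z (- int j - 1))"
proof -
  define y where "y = p / (z * p ^ (2 * N))"
  define t where "t k = gauss_binomial p (2 * N) k * jacobi_term p z (int N - int k)" for k
  have "(\<Prod>i<N. (1 + z * p ^ (2 * i + 1)) * (1 + p ^ (2 * i + 1) / z))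
        = z ^ N * p ^ (N * N) * (\<Prod>i<N + N. 1 + y * p ^ (2 * i))"
    unfolding y_def by (rule prod_triple_factors_eq_prod_geometric[OF p(2) z])
  also have "\<dots> = (\<Sum>k\<le>N + N. z ^ N * p ^ (N * N) * (qbinomial_coeff p (N + N) k * y ^ k))"
    unfolding prod_one_plus_geometric_eq_sum by (simp add: sum_distrib_left)
  also have "\<dots> = (\<Sum>k\<le>N + N. t k)"
  proof (rule sum.cong[OF refl])
    fix k
    assume "k \<in> {..N + N}"
    then show "z ^ N * p ^ (N * N) * (qbinomial_coeff p (N + N) k * y ^ k) = t k"
      using jacobi_term_eq_power_product[OF p(2) z, of N k]
        qbinomial_coeff_eq_gauss_binomial[OF p(1), of k "2 * N"]
      unfolding t_def y_def mult_2[symmetric] by (simp add: mult_ac)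
  qed
  also have "\<dots> = (\<Sum>j\<le>N. t (N - j)) + (\<Sum>j<N. t (N + 1 + j))"
    by (simp only: sum_atMost_add sum_atMost_reflect[of t N])
  also have "(\<Sum>j\<le>N. t (N - j))
             = (\<Sum>j\<le>N. gauss_binomial p (2 * N) (N - j) * jacobi_term p z (int j))"
    by (rule sum.cong) (auto simp: t_def of_nat_diff)
  also have "(\<Sum>j<N. t (N + 1 + j))
             = (\<Sum>j<N. gauss_binomial p (2 * N) (N + 1 + j) * jacobi_term p z (- int j - 1))"
  proof (rule sum.cong[OF refl])
    fix j
    have "int N - int (N + 1 + j) = - int j - 1"
      by simp
    then show "t (N + 1 + j)
               = gauss_binomial p (2 * N) (N + 1 + j) * jacobi_term p z (- int j - 1)"
      unfolding t_def by (simp only:)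
  qed
  finally show ?thesis .
qed

section \<open>The Jacobi triple product\<close>

lemma qfact_tendsto: "norm p < 1 \<Longrightarrow> qfact p \<longlonglongrightarrow> qpoch p 2 2"
  using prods_qpoch[of p 2 2] unfolding prods_def qfact_def by (simp add: mult_ac)

lemma gauss_binomial_bounded:
  assumes p: "norm p < 1"
  obtains B where "\<And>n k. norm (gauss_binomial p n k) \<le> B"
proof -
  have Q: "qpoch p 2 2 \<noteq> 0"
    using qpoch_nonzero[OF p] by simp
  obtain U where U: "\<And>n. norm (qfact p n) \<le> U"
    using convergent_imp_Bseq[OF convergentI[OF qfact_tendsto[OF p]]] unfolding Bseq_def by blast
  obtain V where V: "\<And>n. norm (inverse (qfact p n)) \<le> V"
    using convergent_imp_Bseq[OF convergentI[OF tendsto_inverse[OF qfact_tendsto[OF p] Q]]]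
    unfolding Bseq_def by blast
  have "0 \<le> U" "0 \<le> V"
    using order.trans[OF norm_ge_zero U] order.trans[OF norm_ge_zero V] by auto
  have "norm (gauss_binomial p n k) \<le> U * V * V" for n k
  proof -
    have "norm (gauss_binomial p n k)
          = norm (qfact p n) * norm (inverse (qfact p k)) * norm (inverse (qfact p (n - k)))"
      unfolding gauss_binomial_def by (simp add: divide_inverse norm_mult mult.assoc)
    also have "\<dots> \<le> U * V * V"
      by (intro mult_mono U V mult_nonneg_nonneg \<open>0 \<le> U\<close> \<open>0 \<le> V\<close> norm_ge_zero)
    finally show ?thesis .
  qed
  then show ?thesis
    using that by blast
qed

lemma gauss_binomial_tendsto:
  assumes p: "norm p < 1"
    and "filterlim n at_top F" "filterlim k at_top F" "filterlim (\<lambda>x. n x - k x) at_top F"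
  shows "((\<lambda>x. gauss_binomial p (n x) (k x)) \<longlongrightarrow> 1 / qpoch p 2 2) F"
proof -
  have "qpoch p 2 2 \<noteq> 0"
    using qpoch_nonzero[OF p] by simp
  moreover have "((\<lambda>x. qfact p (n x) / (qfact p (k x) * qfact p (n x - k x)))
                  \<longlongrightarrow> qpoch p 2 2 / (qpoch p 2 2 * qpoch p 2 2)) F"
    using assms \<open>qpoch p 2 2 \<noteq> 0\<close>
    by (intro tendsto_divide tendsto_mult filterlim_compose[OF qfact_tendsto[OF p]]) auto
  ultimately show ?thesis
    unfolding gauss_binomial_def by simp
qed

lemma gauss_binomial_middle_tendsto:
  assumes p: "norm p < 1"
  shows "(\<lambda>N. gauss_binomial p (2 * N) (N - j)) \<longlonglongrightarrow> 1 / qpoch p 2 2"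
    and "(\<lambda>N. gauss_binomial p (2 * N) (N + 1 + j)) \<longlonglongrightarrow> 1 / qpoch p 2 2"
proof -
  have double: "filterlim (\<lambda>N::nat. 2 * N) at_top sequentially"
    by (rule filterlim_at_top_mono[OF filterlim_ident]) auto
  have "filterlim (\<lambda>N. 2 * N - (N - j)) at_top sequentially"
    by (rule filterlim_at_top_mono[OF filterlim_ident]) (intro always_eventually allI, simp)
  then show "(\<lambda>N. gauss_binomial p (2 * N) (N - j)) \<longlonglongrightarrow> 1 / qpoch p 2 2"
    by (intro gauss_binomial_tendsto[OF p double filterlim_minus_const_nat_at_top])
  have "(\<lambda>N::nat. 2 * N - (N + 1 + j)) = (\<lambda>N. N - (1 + j))"
    by auto
  then show "(\<lambda>N. gauss_binomial p (2 * N) (N + 1 + j)) \<longlonglongrightarrow> 1 / qpoch p 2 2"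
    using filterlim_minus_const_nat_at_top[of "1 + j"]
    by (intro gauss_binomial_tendsto[OF p double])
       (auto intro: filterlim_at_top_mono[OF filterlim_ident] always_eventually)
qed

lemma tendsto_truncated_sum:
  fixes c :: "nat \<Rightarrow> complex"
  assumes lim: "\<And>j. (\<lambda>N. g N j) \<longlonglongrightarrow> L"
    and bound: "\<And>N j. norm (g N j) \<le> B"
    and summable: "summable (\<lambda>j. norm (c j))"
    and K: "filterlim K at_top sequentially"
  shows "(\<lambda>N. \<Sum>j<K N. g N j * c j) \<longlonglongrightarrow> L * suminf c"
proof -
  define a where "a j N = (if j < K N then g N j * c j else 0)" for j N
  have "0 \<le> B"
    using bound[of 0 0] norm_ge_zero order.trans by blast
  have "eventually (\<lambda>N. summable (\<lambda>j. norm (a j N))) sequentially \<and>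
        summable (\<lambda>j. norm (L * c j)) \<and>
        ((\<lambda>N. \<Sum>j. a j N) \<longlonglongrightarrow> (\<Sum>j. L * c j))"
  proof (rule tannerys_theorem[where M = "\<lambda>j. B * norm (c j)"])
    fix j
    have "eventually (\<lambda>N. Suc j \<le> K N) sequentially"
      using K unfolding filterlim_at_top by blast
    then have "eventually (\<lambda>N. j < K N) sequentially"
      by eventually_elim simp
    then have "eventually (\<lambda>N. g N j * c j = a j N) sequentially"
      by eventually_elim (simp add: a_def)
    then show "(\<lambda>N. a j N) \<longlonglongrightarrow> L * c j"
      by (rule Lim_transform_eventually[OF tendsto_mult[OF lim tendsto_const]])
  next
    have "norm (a j N) \<le> B * norm (c j)" for j N
      using mult_right_mono[OF bound[of N j] norm_ge_zero[of "c j"]] \<open>0 \<le> B\<close>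
      by (simp add: a_def norm_mult)
    then show "eventually (\<lambda>(j, N). norm (a j N) \<le> B * norm (c j)) (at_top \<times>\<^sub>F sequentially)"
      by (simp add: case_prod_beta always_eventually)
  next
    show "summable (\<lambda>j. B * norm (c j))"
      using summable by (rule summable_mult)
  qed simp
  moreover have "(\<Sum>j. a j N) = (\<Sum>j<K N. g N j * c j)" for N
    by (subst suminf_finite[of "{..<K N}"]) (auto simp: a_def)
  moreover have "(\<Sum>j. L * c j) = L * suminf c"
    by (rule suminf_mult[OF summable_norm_cancel[OF summable]])
  ultimately show ?thesis
    by simp
qed

lemma summable_power_square_mult:
  fixes r c :: real
  assumes r: "0 \<le> r" "r < 1" and c: "0 \<le> c"
  shows "summable (\<lambda>j. r ^ (j * j) * c ^ j)"
proof (rule summable_comparison_test_ev)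
  have "(\<lambda>j. r ^ j * c) \<longlonglongrightarrow> 0 * c"
    using r by (intro tendsto_mult LIMSEQ_power_zero) auto
  then have "eventually (\<lambda>j. r ^ j * c < 1/2) sequentially"
    by (intro order_tendstoD) auto
  then show "eventually (\<lambda>j. norm (r ^ (j * j) * c ^ j) \<le> (1/2) ^ j) sequentially"
  proof eventually_elim
    case (elim j)
    have "norm (r ^ (j * j) * c ^ j) = (r ^ j * c) ^ j"
      using r c by (simp add: power_mult power_mult_distrib)
    also have "\<dots> \<le> (1/2) ^ j"
      using elim r c by (intro power_mono) auto
    finally show ?case .
  qed
qed (simp add: summable_geometric)

lemma summable_jacobi_term_nonneg:
  assumes "norm p < 1"
  shows "summable (\<lambda>j. norm (jacobi_term p z (int j)))"
proof -
  have "norm (jacobi_term p z (int j)) = norm p ^ (j * j) * norm z ^ j" for j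
    unfolding jacobi_term_def by (simp add: norm_mult norm_power flip: of_nat_mult)
  then show ?thesis
    using summable_power_square_mult[of "norm p" "norm z"] assms by simp
qed

lemma summable_jacobi_term_neg:
  assumes "norm p < 1"
  shows "summable (\<lambda>j. norm (jacobi_term p z (- int j - 1)))"
proof -
  have "norm (jacobi_term p z (- int j - 1)) = norm p ^ (Suc j * Suc j) * (1 / norm z) ^ Suc j"
    for j
  proof -
    have "(- int j - 1) * (- int j - 1) = int (Suc j * Suc j)" "- int j - 1 = - int (Suc j)"
      by (simp_all add: algebra_simps)
    then show ?thesis
      unfolding jacobi_term_def
      by (simp only: power_int_minus power_int_of_nat)
         (simp add: norm_mult norm_power norm_inverse power_one_over divide_inverse power_inverse)
  qed
  then show ?thesis
    using assms summable_ignore_initial_segment[OF summable_power_square_mult[of "norm p" "1 / norm z"], of 1]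
    by simp
qed

lemma has_sum_jacobi_term:
  assumes "norm p < 1"
  shows "(jacobi_term p z has_sum
          ((\<Sum>j. jacobi_term p z (int j)) + (\<Sum>j. jacobi_term p z (- int j - 1)))) UNIV"
  using has_sum_int_split summable_jacobi_term_nonneg summable_jacobi_term_neg assms by blast

text \<open>The Jacobi triple product follows from the finite version as \<open>N \<rightarrow> \<infinity>\<close>: each Gaussian
  binomial coefficient tends to \<open>1 / (p\<^sup>2; p\<^sup>2)\<^sub>\<infinity>\<close> and they are uniformly bounded.\<close>

theorem jacobi_triple_product:
  fixes p z :: complex
  assumes p: "norm p < 1" "p \<noteq> 0" and z: "z \<noteq> 0"
  shows "(\<lambda>n. (1 - p ^ (2 * n + 2)) * ((1 + z * p ^ (2 * n + 1)) * (1 + p ^ (2 * n + 1) / z)))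
           prods (\<Sum>\<^sub>\<infinity>n. jacobi_term p z n)" (is "?f prods _")
proof -
  define Q where "Q = qpoch p 2 2"
  define S_pos where "S_pos = (\<Sum>j. jacobi_term p z (int j))"
  define S_neg where "S_neg = (\<Sum>j. jacobi_term p z (- int j - 1))"
  obtain B where B: "\<And>n k. norm (gauss_binomial p n k) \<le> B"
    using gauss_binomial_bounded[OF p(1)] by blast
  have "(\<lambda>N. \<Sum>j<Suc N. gauss_binomial p (2 * N) (N - j) * jacobi_term p z (int j))
          \<longlonglongrightarrow> 1 / Q * S_pos"
    unfolding S_pos_def Q_def
    by (rule tendsto_truncated_sum[OF gauss_binomial_middle_tendsto(1)[OF p(1)] B
          summable_jacobi_term_nonneg[OF p(1)] filterlim_Suc])
  moreover have "(\<lambda>N. \<Sum>j<N. gauss_binomial p (2 * N) (N + 1 + j) * jacobi_term p z (- int j - 1))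
                   \<longlonglongrightarrow> 1 / Q * S_neg"
    unfolding S_neg_def Q_def
    by (rule tendsto_truncated_sum[OF gauss_binomial_middle_tendsto(2)[OF p(1)] B
          summable_jacobi_term_neg[OF p(1)] filterlim_ident])
  ultimately have "(\<lambda>n. (1 + z * p ^ (2 * n + 1)) * (1 + p ^ (2 * n + 1) / z))
                    prods (1 / Q * S_pos + 1 / Q * S_neg)"
    unfolding prods_def finite_jacobi_triple_product[OF p z] lessThan_Suc_atMost[symmetric]
    by (rule tendsto_add)
  moreover have "(\<lambda>n. 1 - p ^ (2 * n + 2)) prods Q"
    unfolding Q_def using prods_qpoch[OF p(1), of 2 2] by simp
  ultimately have "?f prods (Q * (1 / Q * S_pos + 1 / Q * S_neg))"
    by (intro prods_mult)
  also have "Q * (1 / Q * S_pos + 1 / Q * S_neg) = S_pos + S_neg"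
    using qpoch_nonzero[OF p(1), of 2 2] unfolding Q_def by (simp add: field_simps)
  also have "\<dots> = (\<Sum>\<^sub>\<infinity>n. jacobi_term p z n)"
    unfolding S_pos_def S_neg_def by (rule infsumI[OF has_sum_jacobi_term[OF p(1)], symmetric])
  finally show ?thesis .
qed

section \<open>Theta series\<close>

definition theta_term :: "complex \<Rightarrow> nat \<Rightarrow> nat \<Rightarrow> complex \<Rightarrow> int \<Rightarrow> complex" where
  "theta_term q a b c n = c powi n * q powi (int a * n * n + int b * n)"

definition theta :: "complex \<Rightarrow> nat \<Rightarrow> nat \<Rightarrow> complex \<Rightarrow> complex" where
  "theta q a b c = (\<Sum>\<^sub>\<infinity>n. theta_term q a b c n)"

lemma theta_term_eq_jacobi_term:
  assumes "q \<noteq> 0"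
  shows "theta_term q a b c = jacobi_term (q ^ a) (c * q ^ b)"
proof
  fix n
  show "theta_term q a b c n = jacobi_term (q ^ a) (c * q ^ b) n"
    unfolding theta_term_def jacobi_term_def power_int_mult_distrib power_int_power
      power_int_add[OF disjI1[OF assms]]
    by (simp only: mult_ac)
qed

lemma has_sum_theta:
  assumes "norm q < 1" "q \<noteq> 0" "0 < a"
  shows "(theta_term q a b c has_sum theta q a b c) UNIV"
proof -
  have "norm (q ^ a) < 1"
    using assms by (simp add: norm_power power_less_one_iff)
  from has_sum_jacobi_term[OF this] show ?thesis
    unfolding theta_def theta_term_eq_jacobi_term[OF assms(2)]
    by (metis has_sum_imp_summable has_sum_infsum)
qed

lemma theta_prods:
  assumes q: "norm q < 1" "q \<noteq> 0" and c: "c\<^sup>2 = 1" and "0 < a" "b \<le> a"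
  shows "(\<lambda>n. (1 - q ^ (2 * a * n + 2 * a)) * ((1 + c * q ^ (2 * a * n + (a + b)))
                                               * (1 + c * q ^ (2 * a * n + (a - b)))))
           prods theta q a b c"
proof -
  have "norm (q ^ a) < 1" "q ^ a \<noteq> 0" "c * q ^ b \<noteq> 0"
    using assms by (auto simp: norm_power power_less_one_iff)
  from jacobi_triple_product[OF this]
  have jtp: "(\<lambda>n. (1 - (q ^ a) ^ (2 * n + 2)) * ((1 + c * q ^ b * (q ^ a) ^ (2 * n + 1))
                                          * (1 + (q ^ a) ^ (2 * n + 1) / (c * q ^ b))))
          prods theta q a b c"
    unfolding theta_def theta_term_eq_jacobi_term[OF q(2)] .
  have factors: "(q ^ a) ^ (2 * n + 2) = q ^ (2 * a * n + 2 * a)"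
    "c * q ^ b * (q ^ a) ^ (2 * n + 1) = c * q ^ (2 * a * n + (a + b))"
    "(q ^ a) ^ (2 * n + 1) / (c * q ^ b) = c * q ^ (2 * a * n + (a - b))" for n
  proof -
    have "c \<noteq> 0"
      using c by auto
    then have "1 / c = c"
      using c by (simp add: divide_eq_eq power2_eq_square)
    moreover have "(q ^ a) ^ (2 * n + 1) = q ^ (2 * a * n + (a - b)) * q ^ b"
      using \<open>b \<le> a\<close> by (simp add: power_mult[symmetric] power_add[symmetric] algebra_simps)
    ultimately show "(q ^ a) ^ (2 * n + 1) / (c * q ^ b) = c * q ^ (2 * a * n + (a - b))"
      using q(2) by (simp add: divide_inverse mult.commute[of c])
  qed (simp_all add: power_mult[symmetric] power_add[symmetric] algebra_simps)
  show ?thesis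
    using jtp unfolding factors .
qed

lemma theta_1_eq_qpoch:
  assumes q: "norm q < 1" "q \<noteq> 0" and "b < a"
  shows "theta q a b 1
         = qpoch q (2 * a) (2 * a) * (qpoch_plus q (2 * a) (a + b) * qpoch_plus q (2 * a) (a - b))"
proof -
  have "(\<lambda>n. (1 - q ^ (2 * a * n + 2 * a))
             * ((1 + q ^ (2 * a * n + (a + b))) * (1 + q ^ (2 * a * n + (a - b))))) prods theta q a b 1"
    (is "?f prods _")
    using theta_prods[OF q, of 1 a b] assms by simp
  moreover have "?f prods (qpoch q (2 * a) (2 * a)
                           * (qpoch_plus q (2 * a) (a + b) * qpoch_plus q (2 * a) (a - b)))"
    using assms by (intro prods_mult prods_qpoch prods_qpoch_plus) auto
  ultimately show ?thesis
    using prods_unique by blast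
qed

lemma theta_neg1_eq_qpoch:
  assumes q: "norm q < 1" "q \<noteq> 0" and "b < a"
  shows "theta q a b (-1)
         = qpoch q (2 * a) (2 * a) * (qpoch q (2 * a) (a + b) * qpoch q (2 * a) (a - b))"
proof -
  have "(\<lambda>n. (1 - q ^ (2 * a * n + 2 * a))
             * ((1 - q ^ (2 * a * n + (a + b))) * (1 - q ^ (2 * a * n + (a - b))))) prods theta q a b (-1)"
    (is "?f prods _")
    using theta_prods[OF q, of "-1" a b] assms by simp
  moreover have "?f prods (qpoch q (2 * a) (2 * a) * (qpoch q (2 * a) (a + b) * qpoch q (2 * a) (a - b)))"
    using assms by (intro prods_mult prods_qpoch) auto
  ultimately show ?thesis
    using prods_unique by blast
qed

text \<open>For \<open>b = a\<close> the last factor of the triple product is \<open>1 + q\<^sup>2\<^sup>a\<^sup>n\<close>, which equals \<open>2\<close> at \<open>n = 0\<close>.\<close>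

lemma theta_diagonal_eq_qpoch:
  assumes q: "norm q < 1" "q \<noteq> 0" and "0 < a"
  shows "theta q a a 1 = 2 * qpoch q (2 * a) (2 * a) * qpoch_plus q (2 * a) (2 * a) ^ 2"
proof -
  define P where "P = qpoch q (2 * a) (2 * a) * qpoch_plus q (2 * a) (2 * a)"
  have "P \<noteq> 0"
    unfolding P_def using assms by (simp add: qpoch_nonzero qpoch_plus_nonzero)
  have P: "(\<lambda>n. (1 - q ^ (2 * a * n + 2 * a)) * (1 + q ^ (2 * a * n + 2 * a))) prods P"
    unfolding P_def using assms by (intro prods_mult prods_qpoch prods_qpoch_plus) auto
  have T: "(\<lambda>n. ((1 - q ^ (2 * a * n + 2 * a)) * (1 + q ^ (2 * a * n + 2 * a)))
                 * (1 + q ^ (2 * a * n))) prods theta q a a 1"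
    using theta_prods[OF q, of 1 a a] assms by (simp add: mult.assoc add.commute)
  have nz: "(1 - q ^ (2 * a * n + 2 * a)) * (1 + q ^ (2 * a * n + 2 * a)) \<noteq> 0" for n
    using one_minus_power_nonzero[OF q(1)] one_plus_power_nonzero[OF q(1)] assms by simp
  from prods_divide[OF T P \<open>P \<noteq> 0\<close>]
  have "(\<lambda>n. 1 + q ^ (2 * a * n)) prods (theta q a a 1 / P)"
    by (simp only: nonzero_mult_div_cancel_left[OF nz])
  from prods_Suc[OF this] have "(\<lambda>n. 1 + q ^ (2 * a * n + 2 * a)) prods (theta q a a 1 / P / 2)"
    by (simp add: algebra_simps)
  moreover have "(\<lambda>n. 1 + q ^ (2 * a * n + 2 * a)) prods qpoch_plus q (2 * a) (2 * a)"
    using assms by (intro prods_qpoch_plus) auto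
  ultimately have "theta q a a 1 / P / 2 = qpoch_plus q (2 * a) (2 * a)"
    using prods_unique by blast
  then show ?thesis
    using \<open>P \<noteq> 0\<close> unfolding P_def by (simp add: field_simps power2_eq_square)
qed

lemma power_int_even_of_square_eq_1: "c\<^sup>2 = (1::complex) \<Longrightarrow> c powi (2 * m) = 1"
  by (simp add: power_int_mult)

lemma theta_parity_split:
  assumes q: "norm q < 1" "q \<noteq> 0" and c: "c\<^sup>2 = 1" and "0 < a"
  shows "theta q a b c
         = theta q (4 * a) (2 * b) 1 + c * q ^ (a + b) * theta q (4 * a) (4 * a + 2 * b) 1"
proof -
  have "c \<noteq> 0"
    using c by auto
  have even: "theta_term q a b c (2 * m) = theta_term q (4 * a) (2 * b) 1 m" for m
  proof -
    have exp: "int a * (2 * m) * (2 * m) + int b * (2 * m) = int (4 * a) * m * m + int (2 * b) * m"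
      by (simp add: algebra_simps)
    show ?thesis
      unfolding theta_term_def exp using power_int_even_of_square_eq_1[OF c] by simp
  qed
  have odd: "theta_term q a b c (2 * m + 1)
             = c * q ^ (a + b) * theta_term q (4 * a) (4 * a + 2 * b) 1 m" for m
  proof -
    have exp: "int a * (2 * m + 1) * (2 * m + 1) + int b * (2 * m + 1)
          = int (4 * a) * m * m + int (4 * a + 2 * b) * m + int (a + b)"
      by (simp add: algebra_simps)
    show ?thesis
      unfolding theta_term_def exp
      using power_int_even_of_square_eq_1[OF c] \<open>c \<noteq> 0\<close> q(2)
      by (simp add: power_int_add power_add mult_ac)
  qed
  have "(theta_term q a b c has_sum
          (theta q (4 * a) (2 * b) 1 + c * q ^ (a + b) * theta q (4 * a) (4 * a + 2 * b) 1)) UNIV"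
    using assms
    by (intro has_sum_even_odd)
       (simp_all add: even odd has_sum_theta has_sum_cmult_right)
  with has_sum_theta[OF q \<open>0 < a\<close>] show ?thesis
    using has_sum_unique by blast
qed

lemma bij_betw_sum_diff_even:
  "bij_betw (\<lambda>(s, t). (s + t, s - t)) UNIV {(m, n::int). even (m + n)}"
  by (rule bij_betw_byWitness[where f' = "\<lambda>(m, n). ((m + n) div 2, (m - n) div 2)"])
     (auto, presburger+)

lemma bij_betw_sum_diff_odd:
  "bij_betw (\<lambda>(s, t). (- (s + t) - 1, t - s)) UNIV {(m, n::int). odd (m + n)}"
  by (rule bij_betw_byWitness[where f' = "\<lambda>(m, n). (- ((m + n + 1) div 2), n - (m + n + 1) div 2)"])
     (auto elim!: oddE)

lemma theta_term_mult:
  assumes "q \<noteq> 0"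
  shows "theta_term q a b c m * theta_term q a' b' c' n
         = (c powi m * c' powi n)
           * q powi (int a * m * m + int b * m + (int a' * n * n + int b' * n))"
  unfolding theta_term_def power_int_add[OF disjI1[OF assms]] by (simp only: mult_ac)

lemma neg_one_power_int_diff: "(-1::complex) powi (s - t) = (-1) powi s * (-1) powi t"
proof -
  have "(-1::complex) powi t * (-1) powi t = 1"
    by (simp flip: power_int_add power_int_mult_distrib)
  then show ?thesis
    by (simp add: power_int_diff field_simps)
qed

text \<open>Pairing \<open>(m, n) = (s + t, s - t)\<close> and \<open>(m, n) = (-s - t - 1, t - s)\<close> turns
  \<open>2m\<^sup>2 + m + 2n\<^sup>2\<close> into \<open>(4s\<^sup>2 + s) + (4t\<^sup>2 + t)\<close> and \<open>1 + (4s\<^sup>2 + 3s) + (4t\<^sup>2 + 3t)\<close>, respectively.\<close>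

lemma has_sum_theta_pairs_even:
  assumes q: "norm q < 1" "q \<noteq> 0"
  shows "((\<lambda>(m, n). theta_term q 2 1 1 m * theta_term q 2 0 (-1) n) has_sum (theta q 4 1 (-1))\<^sup>2)
           {(m, n). even (m + n)}" (is "(?F has_sum _) _")
proof -
  have "?F (s + t, s - t) = theta_term q 4 1 (-1) s * theta_term q 4 1 (-1) t" for s t
  proof -
    have exp: "int 2 * (s + t) * (s + t) + int 1 * (s + t)
                 + (int 2 * (s - t) * (s - t) + int 0 * (s - t))
               = int 4 * s * s + int 1 * s + (int 4 * t * t + int 1 * t)"
      by (simp add: algebra_simps)
    show ?thesis
      unfolding case_prod_conv theta_term_mult[OF q(2)] exp neg_one_power_int_diff by simp
  qed
  then have "(\<lambda>x. ?F ((\<lambda>(s, t). (s + t, s - t)) x))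
             = (\<lambda>(s, t). theta_term q 4 1 (-1) s * theta_term q 4 1 (-1) t)"
    by (simp only: fun_eq_iff split_paired_All case_prod_conv) simp
  moreover have "((\<lambda>(s, t). theta_term q 4 1 (-1) s * theta_term q 4 1 (-1) t) has_sum (theta q 4 1 (-1))\<^sup>2)
                   UNIV"
    unfolding power2_eq_square using q by (intro has_sum_product has_sum_theta) auto
  ultimately show ?thesis
    using has_sum_reindex_bij_betw[OF bij_betw_sum_diff_even, of ?F] by simp
qed

lemma has_sum_theta_pairs_odd:
  assumes q: "norm q < 1" "q \<noteq> 0"
  shows "((\<lambda>(m, n). theta_term q 2 1 1 m * theta_term q 2 0 (-1) n) has_sum (q * (theta q 4 3 (-1))\<^sup>2))
           {(m, n). odd (m + n)}" (is "(?F has_sum _) _")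
proof -
  have "?F (- (s + t) - 1, t - s) = q * (theta_term q 4 3 (-1) s * theta_term q 4 3 (-1) t)" for s t
  proof -
    have exp: "int 2 * (- (s + t) - 1) * (- (s + t) - 1) + int 1 * (- (s + t) - 1)
                 + (int 2 * (t - s) * (t - s) + int 0 * (t - s))
               = 1 + (int 4 * s * s + int 3 * s + (int 4 * t * t + int 3 * t))"
      by (simp add: algebra_simps)
    show ?thesis
      unfolding case_prod_conv theta_term_mult[OF q(2)] exp neg_one_power_int_diff
      using q(2) by (simp add: power_int_add mult_ac)
  qed
  then have "(\<lambda>x. ?F ((\<lambda>(s, t). (- (s + t) - 1, t - s)) x))
             = (\<lambda>(s, t). q * (theta_term q 4 3 (-1) s * theta_term q 4 3 (-1) t))"
    by (simp only: fun_eq_iff split_paired_All case_prod_conv) simp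
  moreover have "((\<lambda>(s, t). theta_term q 4 3 (-1) s * theta_term q 4 3 (-1) t) has_sum (theta q 4 3 (-1))\<^sup>2)
                   UNIV"
    unfolding power2_eq_square using q by (intro has_sum_product has_sum_theta) auto
  then have "((\<lambda>(s, t). q * (theta_term q 4 3 (-1) s * theta_term q 4 3 (-1) t))
               has_sum (q * (theta q 4 3 (-1))\<^sup>2)) UNIV"
    using has_sum_cmult_right[of _ UNIV "(theta q 4 3 (-1))\<^sup>2" q] by (simp add: case_prod_unfold)
  ultimately show ?thesis
    using has_sum_reindex_bij_betw[OF bij_betw_sum_diff_odd, of ?F] by simp
qed

lemma theta_two_squares:
  assumes q: "norm q < 1" "q \<noteq> 0"
  shows "theta q 2 1 1 * theta q 2 0 (-1) = (theta q 4 1 (-1))\<^sup>2 + q * (theta q 4 3 (-1))\<^sup>2"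
proof -
  have "((\<lambda>(m, n). theta_term q 2 1 1 m * theta_term q 2 0 (-1) n)
           has_sum ((theta q 4 1 (-1))\<^sup>2 + q * (theta q 4 3 (-1))\<^sup>2))
          ({(m, n). even (m + n)} \<union> {(m, n). odd (m + n)})"
    by (rule has_sum_Un_disjoint[OF has_sum_theta_pairs_even[OF q] has_sum_theta_pairs_odd[OF q]]) auto
  moreover have "{(m, n). even (m + n)} \<union> {(m, n). odd ((m::int) + n)} = UNIV"
    by auto
  moreover have "((\<lambda>(m, n). theta_term q 2 1 1 m * theta_term q 2 0 (-1) n)
                   has_sum (theta q 2 1 1 * theta q 2 0 (-1))) UNIV"
    using q by (intro has_sum_product has_sum_theta) auto
  ultimately show ?thesis
    using has_sum_unique by (metis (no_types, lifting))
qed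

text \<open>Both sides are products of the sixteen \<open>qpoch q 16 r\<close>, so this is an identity of rational
  functions in them.\<close>

lemma theta_product_relation:
  assumes q: "norm q < 1" "q \<noteq> 0"
  shows "theta q 4 4 1 * theta q 4 0 1 * (theta q 2 1 1 * theta q 2 0 (-1))\<^sup>2
         = 2 * (theta q 1 0 1)\<^sup>2 * (theta q 4 1 (-1))\<^sup>2 * (theta q 4 3 (-1))\<^sup>2"
proof -
  have atoms: "qpoch q 16 r \<noteq> 0" if "0 < r" for r
    using qpoch_nonzero[OF q(1), of 16 r] that by simp
  note dissect = qpoch_dissect[OF q(1), of 2 8] qpoch_dissect[OF q(1), of 4 4]
    qpoch_dissect[OF q(1), of 8 2]
  show ?thesis
    using q
    by (simp add: theta_1_eq_qpoch theta_neg1_eq_qpoch theta_diagonal_eq_qpoch qpoch_plus_def dissect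
        atoms lessThan_nat_numeral field_simps power2_eq_square flip: numeral_2_eq_2)
qed

lemma theta_nonzero:
  assumes "norm q < 1" "q \<noteq> 0" "b < a" "c = 1 \<or> c = -1"
  shows "theta q a b c \<noteq> 0"
  using assms by (auto simp: theta_1_eq_qpoch theta_neg1_eq_qpoch qpoch_nonzero qpoch_plus_nonzero)

section \<open>The functions v and b\<close>

lemma norm_power_int_sign_sub_one_le:
  fixes w :: complex
  assumes "norm w \<le> r" "r < 1" "k \<in> {-1, 0, 1}"
  shows "norm ((1 - w) powi k - 1) \<le> norm w / (1 - r)"
proof -
  have "0 \<le> r" "norm w < 1"
    using assms norm_ge_zero[of w] by linarith+
  then have "1 - w \<noteq> 0"
    by auto
  have "norm w \<le> norm w / (1 - r)" "0 \<le> norm w / (1 - r)"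
    using \<open>0 \<le> r\<close> assms(2) by (simp_all add: le_divide_eq mult_left_le)
  moreover have "norm (inverse (1 - w) - 1) \<le> norm w / (1 - r)"
  proof -
    have "inverse (1 - w) - 1 = w / (1 - w)"
      using \<open>1 - w \<noteq> 0\<close> by (simp add: field_simps)
    moreover have "1 - r \<le> norm (1 - w)"
      using norm_triangle_ineq2[of 1 w] assms(1) by simp
    moreover have "0 < norm (1 - w) * (1 - r)"
      using \<open>1 - r \<le> norm (1 - w)\<close> assms(2) by (intro mult_pos_pos) linarith+
    ultimately show ?thesis
      by (simp add: norm_divide divide_left_mono)
  qed
  ultimately show ?thesis
    using assms(3) by (auto simp: norm_minus_commute power_int_minus)
qed

lemma summable_kron8_factors:
  fixes x :: complex
  assumes x: "norm x < 1"
  shows "summable (\<lambda>m. norm ((1 - x ^ Suc m) powi kron8 (Suc m) - 1))"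
proof (rule summable_comparison_test)
  have "norm (x ^ Suc m) \<le> norm x" for m
    using x by (simp add: norm_mult norm_power power_le_one mult_left_le)
  moreover have "kron8 n \<in> {-1, 0, 1}" for n
    unfolding kron8_def by auto
  ultimately have "norm ((1 - x ^ Suc m) powi kron8 (Suc m) - 1) \<le> norm (x ^ Suc m) / (1 - norm x)"
    for m
    by (rule norm_power_int_sign_sub_one_le[OF _ x])
  then show "\<exists>N. \<forall>m\<ge>N. norm (norm ((1 - x ^ Suc m) powi kron8 (Suc m) - 1))
                       \<le> norm x ^ Suc m / (1 - norm x)"
    unfolding norm_power by simp
  show "summable (\<lambda>m. norm x ^ Suc m / (1 - norm x))"
    using x
    by (intro summable_divide summable_ignore_initial_segment[OF summable_geometric, of _ 1]) simp
qed

lemma kron8_add_multiple: "kron8 (8 * m + s) = kron8 s"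
  unfolding kron8_def by simp

lemma prodinf_kron8_factors:
  fixes x :: complex
  assumes x: "norm x < 1"
  shows "(\<Prod>m. (1 - x ^ Suc m) powi kron8 (Suc m))
         = qpoch x 8 7 * qpoch x 8 1 / (qpoch x 8 5 * qpoch x 8 3)"
proof -
  define f where "f m = (1 - x ^ Suc m) powi kron8 (Suc m)" for m
  have "(\<lambda>m. \<Prod>r<8. f (8 * m + r)) prods prodinf f"
    unfolding f_def by (intro prods_blocks prods_prodinf summable_kron8_factors x) simp
  moreover have "(\<Prod>r<8. f (8 * m + r))
                 = (1 - x ^ (8 * m + 7)) * (1 - x ^ (8 * m + 1))
                   / ((1 - x ^ (8 * m + 5)) * (1 - x ^ (8 * m + 3)))" for m
  proof -
    define g where "g r = (1 - x ^ (8 * m + Suc r)) powi kron8 (Suc r)" for r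
    have "f (8 * m + r) = g r" for r
      unfolding f_def g_def using kron8_add_multiple[of m "Suc r"] by simp
    then have "(\<Prod>r<8. f (8 * m + r)) = g 0 * g 1 * g 2 * g 3 * g 4 * g 5 * g 6 * g 7"
      by (simp add: lessThan_nat_numeral mult_ac flip: numeral_2_eq_2)
    also have "\<dots> = (1 - x ^ (8 * m + 1)) * inverse (1 - x ^ (8 * m + 3))
                      * inverse (1 - x ^ (8 * m + 5)) * (1 - x ^ (8 * m + 7))"
      by (simp add: g_def kron8_def power_int_minus)
    finally show ?thesis
      by (simp add: field_simps)
  qed
  moreover have "(\<lambda>m. (1 - x ^ (8 * m + 7)) * (1 - x ^ (8 * m + 1))
                       / ((1 - x ^ (8 * m + 5)) * (1 - x ^ (8 * m + 3))))
                   prods (qpoch x 8 7 * qpoch x 8 1 / (qpoch x 8 5 * qpoch x 8 3))"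
    using x by (intro prods_divide prods_mult prods_qpoch) (auto simp: qpoch_nonzero)
  ultimately show ?thesis
    unfolding f_def using prods_unique by auto
qed

lemma prodinf_odd_quotient_squares:
  fixes x :: complex
  assumes x: "norm x < 1"
  shows "(\<Prod>m. ((1 - x ^ (2 * m + 1)) / (1 + x ^ (2 * m + 1)))\<^sup>2) = (qpoch x 2 1 / qpoch_plus x 2 1)\<^sup>2"
proof (rule prodinf_eqI_prods)
  show "(\<lambda>m. ((1 - x ^ (2 * m + 1)) / (1 + x ^ (2 * m + 1)))\<^sup>2)
          prods (qpoch x 2 1 / qpoch_plus x 2 1)\<^sup>2"
    using x by (intro prods_power prods_divide prods_qpoch prods_qpoch_plus qpoch_plus_nonzero) auto
  show "(qpoch x 2 1 / qpoch_plus x 2 1)\<^sup>2 \<noteq> 0"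
    using x by (simp add: qpoch_nonzero qpoch_plus_nonzero)
qed

lemma qpow_of_nat: "qpow \<tau> (real n) = qpow \<tau> 1 ^ n"
  unfolding qpow_def by (simp add: exp_of_nat_mult[symmetric] mult_ac)

lemma qpow_half_squared: "qpow \<tau> (1/2) ^ 2 = qpow \<tau> 1"
  unfolding qpow_def by (simp add: exp_of_nat_mult[symmetric] mult_ac)

lemma qpow_four_times: "qpow (4 * \<tau>) (real (Suc m) / 2 - 1/4) = qpow \<tau> 1 ^ (2 * m + 1)"
proof -
  have "of_real (real (Suc m) / 2 - 1/4) * (4 * \<tau>) = (of_real (real (2 * m + 1)) * \<tau> :: complex)"
    by (simp add: field_simps)
  then have "qpow (4 * \<tau>) (real (Suc m) / 2 - 1/4) = qpow \<tau> (real (2 * m + 1))"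
    unfolding qpow_def by (simp only: mult.assoc[of "2 * of_real pi * \<i>"])
  then show ?thesis
    by (simp only: qpow_of_nat)
qed

lemma norm_qpow_less_1: "0 < Im \<tau> \<Longrightarrow> norm (qpow \<tau> 1) < 1"
  unfolding qpow_def by (simp add: norm_exp_eq_Re)

lemma qpow_nonzero: "qpow \<tau> r \<noteq> 0"
  unfolding qpow_def by simp

lemma v_fun_squared:
  assumes "0 < Im \<tau>"
  defines "x \<equiv> qpow \<tau> 1"
  shows "v_fun \<tau> ^ 2 = x * (theta x 4 3 (-1) / theta x 4 1 (-1))\<^sup>2"
proof -
  have x: "norm x < 1" "x \<noteq> 0"
    unfolding x_def using norm_qpow_less_1[OF assms(1)] qpow_nonzero by auto
  have "(\<Prod>m. (1 - qpow \<tau> (real (Suc m))) powi kron8 (Suc m))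
        = qpoch x 8 7 * qpoch x 8 1 / (qpoch x 8 5 * qpoch x 8 3)"
    unfolding qpow_of_nat x_def[symmetric] by (rule prodinf_kron8_factors[OF x(1)])
  also have "\<dots> = theta x 4 3 (-1) / theta x 4 1 (-1)"
    using x qpoch_nonzero[OF x(1), of 8 8] by (simp add: theta_neg1_eq_qpoch)
  finally have "(\<Prod>m. (1 - qpow \<tau> (real (Suc m))) powi kron8 (Suc m))
                = theta x 4 3 (-1) / theta x 4 1 (-1)" .
  then show ?thesis
    unfolding v_fun_def power_mult_distrib qpow_half_squared x_def by simp
qed

lemma b_fun_four_times:
  assumes "0 < Im \<tau>"
  defines "x \<equiv> qpow \<tau> 1"
  shows "b_fun (4 * \<tau>) = 2 * (theta x 1 0 (-1) / theta x 1 0 1)"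
proof -
  have x: "norm x < 1" "x \<noteq> 0"
    unfolding x_def using norm_qpow_less_1[OF assms(1)] qpow_nonzero by auto
  have "(\<Prod>m. ((1 - qpow (4 * \<tau>) (real (Suc m) / 2 - 1/4))
                 / (1 + qpow (4 * \<tau>) (real (Suc m) / 2 - 1/4)))\<^sup>2)
        = (qpoch x 2 1 / qpoch_plus x 2 1)\<^sup>2"
    unfolding qpow_four_times x_def[symmetric] by (rule prodinf_odd_quotient_squares[OF x(1)])
  also have "\<dots> = theta x 1 0 (-1) / theta x 1 0 1"
    using x qpoch_nonzero[OF x(1), of 2 2]
    by (simp add: theta_1_eq_qpoch theta_neg1_eq_qpoch power2_eq_square)
  finally show ?thesis
    unfolding b_fun_def by simp
qed

lemma quotient_identity_from_theta_relations:
  fixes x t3 t4 A B P X Y :: complex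
  assumes nonzero: "t3 \<noteq> 0" "t4 \<noteq> 0" "X \<noteq> 0" "P \<noteq> 0"
    and parity: "t3\<^sup>2 - t4\<^sup>2 = 4 * x * A * B"
    and squares: "P = X\<^sup>2 + x * Y\<^sup>2"
    and product: "A * B * P\<^sup>2 = 2 * t3\<^sup>2 * X\<^sup>2 * Y\<^sup>2"
  defines "v \<equiv> x * (Y / X)\<^sup>2"
  shows "(v + 1)\<^sup>2 / (v\<^sup>2 - 6 * v + 1) = 4 / (2 * (t4 / t3))\<^sup>2"
proof -
  have "v + 1 = P / X\<^sup>2"
    unfolding v_def squares using nonzero by (simp add: field_simps)
  moreover have "1 - (t4 / t3)\<^sup>2 = (t3\<^sup>2 - t4\<^sup>2) / t3\<^sup>2"
    using nonzero by (simp add: field_simps)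
  ultimately have "(1 - (t4 / t3)\<^sup>2) * (v + 1)\<^sup>2 = 4 * x * (A * B * P\<^sup>2) / (t3\<^sup>2 * (X\<^sup>2)\<^sup>2)"
    unfolding parity by (simp add: power_divide)
  also have "\<dots> = 8 * v"
    unfolding product v_def using nonzero by (simp add: field_simps power2_eq_square)
  finally have "v\<^sup>2 - 6 * v + 1 = (t4 / t3)\<^sup>2 * (v + 1)\<^sup>2"
    by (simp add: algebra_simps power2_eq_square)
  moreover have "v + 1 \<noteq> 0"
    using \<open>v + 1 = P / X\<^sup>2\<close> nonzero by simp
  then have "(v + 1)\<^sup>2 / ((t4 / t3)\<^sup>2 * (v + 1)\<^sup>2) = 4 / (2 * (t4 / t3))\<^sup>2"
    by (simp add: power_mult_distrib del: times_divide_eq_right)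
  ultimately show ?thesis
    by simp
qed

theorem proposition8:
  fixes \<tau> :: complex
  assumes "Im \<tau> > 0"
  shows "(v_fun \<tau> ^ 2 + 1) ^ 2 / (v_fun \<tau> ^ 4 - 6 * v_fun \<tau> ^ 2 + 1)
         = 4 / (b_fun (4 * \<tau>)) ^ 2"
proof -
  define x where "x = qpow \<tau> 1"
  have x: "norm x < 1" "x \<noteq> 0"
    unfolding x_def using norm_qpow_less_1[OF assms] qpow_nonzero by auto
  have "theta x 1 0 1 = theta x 4 0 1 + x * theta x 4 4 1"
    "theta x 1 0 (-1) = theta x 4 0 1 - x * theta x 4 4 1"
    using theta_parity_split[OF x, of 1 1 0] theta_parity_split[OF x, of "-1" 1 0] by simp_all
  then have "(theta x 1 0 1)\<^sup>2 - (theta x 1 0 (-1))\<^sup>2 = 4 * x * theta x 4 0 1 * theta x 4 4 1"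
    by (simp only:) (simp add: algebra_simps power2_eq_square)
  from quotient_identity_from_theta_relations[OF _ _ _ _ this theta_two_squares[OF x]]
  have "(v_fun \<tau> ^ 2 + 1)\<^sup>2 / ((v_fun \<tau> ^ 2)\<^sup>2 - 6 * v_fun \<tau> ^ 2 + 1)
        = 4 / (2 * (theta x 1 0 (-1) / theta x 1 0 1))\<^sup>2"
    using theta_product_relation[OF x] x
    unfolding v_fun_squared[OF assms, folded x_def]
    by (simp add: theta_nonzero mult_ac)
  then show ?thesis
    unfolding b_fun_four_times[OF assms, folded x_def] by (simp flip: power_mult)
qed

end
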